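(* Let $X$ be a separable metrizable space such that $C_p(X)$ is countable dense homogeneous. Then $X$ is a $\gamma$-set.
   Context: $C_p(X)$ is the space of continuous functions $X\to\mathbb{R}$ with the pointwise convergence topology. A space $Y$ is countable dense homogeneous if it is separable and for any two countable dense $D,E\subseteq Y$ there is a homeomorphism $h\colon Y\to Y$ with $h[D]=E$. An open cover $\mathcal{U}$ of $X$ is an $\omega$-cover if $X\notin\mathcal{U}$ and every finite subset of $X$ is contained in some member of $\mathcal{U}$; a countable open cover $\{U_n\}$ is a $\gamma$-cover if it is infinite and each point of $X$ lies in all but finitely many $U_n$. $X$ is a $\gamma$-set if every open $\omega$-cover of $X$ contains a $\gamma$-cover as a subfamily. *)

theory Defs
  imports "HOL-Analysis.Analysis"
begin

text \<open>C_p(X): real-valued continuous functions on X with the topology of pointwise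
convergence, i.e. the subspace of the product space R^X (functions are taken
extensional, i.e. undefined outside topspace X, as required by product_topology).\<close>
definition Cp :: "'a topology \<Rightarrow> ('a \<Rightarrow> real) topology" where
  "Cp X = subtopology (product_topology (\<lambda>_. euclideanreal) (topspace X))
            {f. continuous_map X euclideanreal f \<and> f \<in> extensional (topspace X)}"

definition countable_dense_homogeneous :: "'b topology \<Rightarrow> bool" where
  "countable_dense_homogeneous Y \<longleftrightarrow> separable_space Y \<and>
     (\<forall>D E. countable D \<and> D \<subseteq> topspace Y \<and> Y closure_of D = topspace Y \<and>
            countable E \<and> E \<subseteq> topspace Y \<and> Y closure_of E = topspace Y \<longrightarrow>
            (\<exists>h. homeomorphic_map Y Y h \<and> h ` D = E))"

definition open_cover :: "'a topology \<Rightarrow> 'a set set \<Rightarrow> bool" where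
  "open_cover X \<U> \<longleftrightarrow> (\<forall>U\<in>\<U>. openin X U) \<and> topspace X \<subseteq> \<Union>\<U>"

definition omega_cover :: "'a topology \<Rightarrow> 'a set set \<Rightarrow> bool" where
  "omega_cover X \<U> \<longleftrightarrow> open_cover X \<U> \<and> topspace X \<notin> \<U> \<and>
     (\<forall>F. finite F \<and> F \<subseteq> topspace X \<longrightarrow> (\<exists>U\<in>\<U>. F \<subseteq> U))"

definition gamma_cover :: "'a topology \<Rightarrow> 'a set set \<Rightarrow> bool" where
  "gamma_cover X \<U> \<longleftrightarrow> open_cover X \<U> \<and> countable \<U> \<and> infinite \<U> \<and>
     (\<forall>x\<in>topspace X. finite {U\<in>\<U>. x \<notin> U})"

definition gamma_set :: "'a topology \<Rightarrow> bool" where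
  "gamma_set X \<longleftrightarrow> (\<forall>\<U>. omega_cover X \<U> \<longrightarrow> (\<exists>\<V>\<subseteq>\<U>. gamma_cover X \<V>))"

end

theory Submission
  imports Defs
begin

text \<open>Let \<open>\<U>\<close> be an \<open>\<omega>\<close>-cover. Since \<open>X\<close> is separable metric, there are countably many
  continuous bumps \<open>\<Phi> j\<close>, each vanishing outside some \<open>W j \<in> \<U>\<close>, such that every
  finite set lies where some \<open>\<Phi> j\<close> is positive. Modifying a countable dense subset of
  \<open>C\<^sub>p(X)\<close> by these bumps gives a countable dense set \<open>{f n}\<close> with \<open>f n \<ge> n\<close> outside
  \<open>W (\<iota> n)\<close>. Countable dense homogeneity, applied to \<open>{f n}\<close> and \<open>{f n} \<union> {1/(k+1)}\<close>,
  transports the convergent sequence of constants \<open>1/(k+1)\<close> to a pointwise convergent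
  sequence \<open>f (m k)\<close> with \<open>m\<close> injective. Pointwise convergence bounds \<open>f (m k) x\<close>, so each
  \<open>x\<close> lies outside only finitely many \<open>W (\<iota> (m k))\<close>: these form a \<open>\<gamma>\<close>-subcover of \<open>\<U>\<close>.\<close>

lemma topspace_Cp:
  "topspace (Cp X) = {f. continuous_map X euclideanreal f \<and> f \<in> extensional (topspace X)}"
  unfolding Cp_def by (auto simp: topspace_subtopology PiE_def)

lemma restrict_in_Cp:
  assumes "continuous_map X euclideanreal f"
  shows "restrict f (topspace X) \<in> topspace (Cp X)"
proof -
  have "continuous_map X euclideanreal (restrict f (topspace X))"
    by (rule continuous_map_eq[OF assms]) auto
  then show ?thesis by (simp add: topspace_Cp)
qed

lemma limitin_Cp_pointwise:
  assumes "limitin (Cp X) a l sequentially" "x \<in> topspace X"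
  shows "(\<lambda>k. a k x) \<longlonglongrightarrow> l x"
proof -
  have "limitin (product_topology (\<lambda>_. euclideanreal) (topspace X)) a l sequentially"
    using assms(1) unfolding Cp_def limitin_subtopology by blast
  then show ?thesis
    using assms(2) unfolding limitin_componentwise by simp
qed

lemma limitin_Cp_const:
  fixes c :: "nat \<Rightarrow> real"
  assumes "c \<longlonglongrightarrow> l"
  shows "limitin (Cp X) (\<lambda>k. restrict (\<lambda>_. c k) (topspace X)) (restrict (\<lambda>_. l) (topspace X))
           sequentially"
proof -
  have const: "\<And>r. restrict (\<lambda>_. r) (topspace X) \<in> topspace (Cp X)"
    by (rule restrict_in_Cp) simp
  have "limitin (product_topology (\<lambda>_. euclideanreal) (topspace X))
          (\<lambda>k. restrict (\<lambda>_. c k) (topspace X)) (restrict (\<lambda>_. l) (topspace X)) sequentially"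
    unfolding limitin_componentwise using assms by (auto simp: PiE_def)
  with const show ?thesis
    unfolding Cp_def limitin_subtopology by (simp add: topspace_Cp)
qed

lemma Cp_dense_if_agrees_on_finite_sets:
  assumes D: "D \<subseteq> topspace (Cp X)"
    and D0: "Cp X closure_of D0 = topspace (Cp X)"
    and agree: "\<And>g G. g \<in> D0 \<Longrightarrow> finite G \<Longrightarrow> G \<subseteq> topspace X \<Longrightarrow> \<exists>f\<in>D. \<forall>x\<in>G. f x = g x"
  shows "Cp X closure_of D = topspace (Cp X)"
proof -
  let ?P = "product_topology (\<lambda>_. euclideanreal) (topspace X)"
  let ?S = "{f. continuous_map X euclideanreal f \<and> f \<in> extensional (topspace X)}"
  have Cp_eq: "Cp X = subtopology ?P ?S" by (simp add: Cp_def)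
  have "g \<in> Cp X closure_of D" if g: "g \<in> topspace (Cp X)" for g
    unfolding in_closure_of
  proof (intro conjI allI impI)
    show "g \<in> topspace (Cp X)" by (rule g)
    fix T assume T: "g \<in> T \<and> openin (Cp X) T"
    then obtain T' where T': "openin ?P T'" "T = T' \<inter> ?S"
      unfolding Cp_eq openin_subtopology by blast
    then obtain U where U: "finite {x\<in>topspace X. U x \<noteq> UNIV}"
        "\<forall>x\<in>topspace X. open (U x)" "g \<in> PiE (topspace X) U" "PiE (topspace X) U \<subseteq> T'"
      using T unfolding openin_product_topology_alt by auto
    have "openin ?P (PiE (topspace X) U)"
      unfolding openin_product_topology_alt using U(1,2) by auto
    then have "openin (Cp X) (PiE (topspace X) U \<inter> ?S)"
      unfolding Cp_eq openin_subtopology by blast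
    moreover have "g \<in> PiE (topspace X) U \<inter> ?S" using g U(3) by (simp add: topspace_Cp)
    moreover have "g \<in> Cp X closure_of D0" using g D0 by simp
    ultimately obtain h where h: "h \<in> D0" "h \<in> PiE (topspace X) U \<inter> ?S"
      unfolding in_closure_of by meson
    define G where "G = {x\<in>topspace X. U x \<noteq> UNIV}"
    obtain f where f: "f \<in> D" "\<forall>x\<in>G. f x = h x"
      using agree[OF h(1), of G] U(1) by (auto simp: G_def)
    have fS: "f \<in> ?S" using f(1) D by (auto simp: topspace_Cp)
    have "f \<in> PiE (topspace X) U"
      using fS f(2) h(2) by (auto simp: PiE_iff G_def)
    then show "\<exists>y. y \<in> D \<and> y \<in> T" using f(1) fS U(4) T' by blast
  qed
  then show ?thesis by (intro subset_antisym closure_of_subset_topspace subsetI)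
qed

lemma eventually_linear_minus_quadratic_le:
  fixes c e :: real
  assumes "c > 0"
  shows "\<forall>\<^sub>F n in sequentially. real n - (real n)\<^sup>2 * c \<le> e"
proof -
  obtain N :: nat where N: "(1 + \<bar>e\<bar>) / c < real N"
    using reals_Archimedean2 by blast
  have "real n - (real n)\<^sup>2 * c \<le> e" if "n \<ge> N" for n
  proof -
    have "(1 + \<bar>e\<bar>) / c < real n" using N that by linarith
    then have big: "1 + \<bar>e\<bar> < real n * c" using assms by (simp add: field_simps)
    have "0 < (1 + \<bar>e\<bar>) / c" using assms by simp
    then have "0 < real n" using \<open>(1 + \<bar>e\<bar>) / c < real n\<close> by linarith
    then have n1: "real n \<ge> 1" by simp
    have "real n + \<bar>e\<bar> \<le> real n * (1 + \<bar>e\<bar>)"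
      using n1 mult_left_mono[OF n1, of "\<bar>e\<bar>"] by (simp add: algebra_simps)
    also have "\<dots> \<le> real n * (real n * c)"
      using big n1 by (intro mult_left_mono) auto
    finally show ?thesis by (simp add: power2_eq_square algebra_simps)
  qed
  then show ?thesis unfolding eventually_sequentially by blast
qed


text \<open>Here \<open>f n = max (g i) (n - n\<^sup>2 \<Phi> j)\<close>, where \<open>n\<close> encodes a triple \<open>(i, j, N)\<close>: it is
  at least \<open>n\<close> where \<open>\<Phi> j \<le> 0\<close>, and it agrees with \<open>g i\<close> on a finite set where \<open>\<Phi> j > 0\<close>
  once \<open>N\<close> is large enough.\<close>

lemma Cp_dense_sequence_escaping:
  fixes \<Phi> :: "nat \<Rightarrow> 'a \<Rightarrow> real"
  assumes sep: "separable_space (Cp X)"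
    and cont: "\<And>j. continuous_map X euclideanreal (\<Phi> j)"
    and pos: "\<And>G. finite G \<Longrightarrow> G \<subseteq> topspace X \<Longrightarrow> \<exists>j. \<forall>x\<in>G. 0 < \<Phi> j x"
  obtains f :: "nat \<Rightarrow> 'a \<Rightarrow> real" and \<iota> :: "nat \<Rightarrow> nat"
  where "range f \<subseteq> topspace (Cp X)" "Cp X closure_of range f = topspace (Cp X)"
    "\<And>n x. x \<in> topspace X \<Longrightarrow> \<Phi> (\<iota> n) x \<le> 0 \<Longrightarrow> real n \<le> f n x"
proof -
  obtain D0 where D0: "countable D0" "D0 \<subseteq> topspace (Cp X)" "Cp X closure_of D0 = topspace (Cp X)"
    using sep unfolding separable_space_def by auto
  have "restrict (\<lambda>_. 0) (topspace X) \<in> topspace (Cp X)"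
    by (rule restrict_in_Cp) simp
  then have "D0 \<noteq> {}" using D0(3) by auto
  define g where "g = from_nat_into D0"
  define \<kappa> where "\<kappa> n = fst (prod_decode (fst (prod_decode n)))" for n
  define \<iota> where "\<iota> n = snd (prod_decode (fst (prod_decode n)))" for n
  define f where "f n = restrict (\<lambda>x. max (g (\<kappa> n) x) (real n - (real n)\<^sup>2 * \<Phi> (\<iota> n) x))
                          (topspace X)" for n
  have "f n \<in> topspace (Cp X)" for n
  proof -
    have "g (\<kappa> n) \<in> topspace (Cp X)"
      using from_nat_into[OF \<open>D0 \<noteq> {}\<close>] D0(2) by (auto simp: g_def)
    then have "continuous_map X euclideanreal (g (\<kappa> n))" by (simp add: topspace_Cp)
    then have "continuous_map X euclideanreal
                 (\<lambda>x. max (g (\<kappa> n) x) (real n - (real n)\<^sup>2 * \<Phi> (\<iota> n) x))"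
      using cont by (intro continuous_map_real_max continuous_map_diff continuous_map_real_mult) auto
    then show ?thesis unfolding f_def by (rule restrict_in_Cp)
  qed
  then have range_f: "range f \<subseteq> topspace (Cp X)" by auto
  moreover have "Cp X closure_of range f = topspace (Cp X)"
  proof (rule Cp_dense_if_agrees_on_finite_sets[OF range_f D0(3)])
    fix h G assume h: "h \<in> D0" and G: "finite G" "G \<subseteq> topspace X"
    obtain i where i: "g i = h" using from_nat_into_surj[OF D0(1) h] by (auto simp: g_def)
    obtain j where j: "\<forall>x\<in>G. 0 < \<Phi> j x" using pos[OF G] by blast
    have "\<forall>\<^sub>F n in sequentially. \<forall>x\<in>G. real n - (real n)\<^sup>2 * \<Phi> j x \<le> h x"
      using j G(1) eventually_linear_minus_quadratic_le by (simp add: eventually_ball_finite)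
    then obtain N where N: "\<And>n. n \<ge> N \<Longrightarrow> \<forall>x\<in>G. real n - (real n)\<^sup>2 * \<Phi> j x \<le> h x"
      unfolding eventually_sequentially by blast
    define n where "n = prod_encode (prod_encode (i, j), N)"
    have "\<kappa> n = i" "\<iota> n = j" "n \<ge> N"
      by (auto simp: n_def \<kappa>_def \<iota>_def le_prod_encode_2)
    then have "\<forall>x\<in>G. f n x = h x" using N G(2) i by (auto simp: f_def)
    then show "\<exists>f'\<in>range f. \<forall>x\<in>G. f' x = h x" by blast
  qed
  moreover have "real n \<le> f n x" if "x \<in> topspace X" "\<Phi> (\<iota> n) x \<le> 0" for n x
  proof -
    have "real n \<le> real n - (real n)\<^sup>2 * \<Phi> (\<iota> n) x"
      using that(2) by (simp add: mult_nonneg_nonpos)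
    then show ?thesis using that(1) by (simp add: f_def)
  qed
  ultimately show ?thesis by (rule that)
qed

lemma countable_dense_homogeneous_injective_limit_in_dense:
  assumes cdh: "countable_dense_homogeneous Y"
    and D: "countable D" "D \<subseteq> topspace Y" "Y closure_of D = topspace Y"
    and c: "limitin Y c z sequentially" "range c \<subseteq> topspace Y" "inj c"
  obtains e l where "inj e" "range e \<subseteq> D" "limitin Y e l sequentially"
proof -
  define E where "E = D \<union> range c"
  have "Y closure_of D \<subseteq> Y closure_of E" by (rule closure_of_mono) (auto simp: E_def)
  then have "Y closure_of E = topspace Y"
    using D(3) by (intro subset_antisym closure_of_subset_topspace) auto
  moreover have "countable E" "E \<subseteq> topspace Y" using D c(2) by (auto simp: E_def)
  ultimately obtain h where h: "homeomorphic_map Y Y h" "h ` D = E"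
    using cdh D unfolding countable_dense_homogeneous_def by blast
  then obtain k where hk: "homeomorphic_maps Y Y h k" using homeomorphic_map_maps by blast
  then have kh: "\<And>y. y \<in> topspace Y \<Longrightarrow> k (h y) = y" "\<And>y. y \<in> topspace Y \<Longrightarrow> h (k y) = y"
    and k_cont: "continuous_map Y Y k"
    unfolding homeomorphic_maps_def by auto
  have "inj (k \<circ> c)"
  proof (rule injI)
    fix a b assume "(k \<circ> c) a = (k \<circ> c) b"
    then have "h (k (c a)) = h (k (c b))" by simp
    moreover have "c a \<in> topspace Y" "c b \<in> topspace Y" using c(2) by auto
    ultimately have "c a = c b" using kh(2) by metis
    then show "a = b" using c(3) by (simp add: inj_eq)
  qed
  moreover have "range (k \<circ> c) \<subseteq> D"
  proof
    fix y assume "y \<in> range (k \<circ> c)"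
    then obtain n where "y = k (c n)" by auto
    moreover have "c n \<in> h ` D" using h(2) by (auto simp: E_def)
    ultimately show "y \<in> D" using kh(1) D(2) by auto
  qed
  moreover have "limitin Y (k \<circ> c) (k z) sequentially"
    by (rule continuous_map_limit[OF k_cont c(1)])
  ultimately show ?thesis by (rule that)
qed

lemma finite_dominated_by_convergent:
  fixes a :: "nat \<Rightarrow> real"
  assumes "a \<longlonglongrightarrow> l" "inj m"
  shows "finite {k. real (m k) \<le> a k}"
proof -
  have "\<forall>\<^sub>F k in sequentially. a k < l + 1"
    using order_tendstoD(2)[OF assms(1)] by simp
  then have "finite {k. \<not> a k < l + 1}"
    by (simp add: cofinite_eq_sequentially[symmetric] eventually_cofinite)
  moreover have "finite (m -` {..nat \<lceil>l + 1\<rceil>})"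
    using assms(2) by (intro finite_vimageI) auto
  moreover have "{k. real (m k) \<le> a k} \<subseteq> {k. \<not> a k < l + 1} \<union> m -` {..nat \<lceil>l + 1\<rceil>}"
  proof
    fix k assume "k \<in> {k. real (m k) \<le> a k}"
    then have "a k < l + 1 \<Longrightarrow> int (m k) \<le> \<lceil>l + 1\<rceil>"
      using le_of_int_ceiling[of "l + 1"] by simp linarith
    then show "k \<in> {k. \<not> a k < l + 1} \<union> m -` {..nat \<lceil>l + 1\<rceil>}"
      by (auto simp: le_nat_iff)
  qed
  ultimately show ?thesis by (meson finite_UnI finite_subset)
qed

lemma gamma_cover_range:
  fixes W :: "nat \<Rightarrow> 'a set"
  assumes opens: "\<And>k. openin X (W k)"
    and proper: "\<And>k. W k \<noteq> topspace X"
    and cofinite: "\<And>x. x \<in> topspace X \<Longrightarrow> finite {k. x \<notin> W k}"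
  shows "gamma_cover X (range W)"
  unfolding gamma_cover_def open_cover_def
proof (intro conjI ballI)
  have meets: "\<exists>k\<in>K. x \<in> W k" if "infinite K" "x \<in> topspace X" for K x
    using Diff_infinite_finite[OF cofinite[OF that(2)] that(1)] by (metis Diff_iff ex_in_conv
        finite.emptyI mem_Collect_eq)
  show "\<And>U. U \<in> range W \<Longrightarrow> openin X U" using opens by auto
  show "topspace X \<subseteq> \<Union>(range W)" using meets[of UNIV] by auto
  show "countable (range W)" by simp
  show "infinite (range W)"
  proof
    assume "finite (range W)"
    then obtain k0 where k0: "infinite {k. W k = W k0}"
      using pigeonhole_infinite[of "UNIV :: nat set" W] by auto
    have "topspace X \<subseteq> W k0" using meets[OF k0] by auto
    then show False using proper[of k0] openin_subset[OF opens[of k0]] by blast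
  qed
  fix x assume "x \<in> topspace X"
  then have "finite (W ` {k. x \<notin> W k})" using cofinite by simp
  moreover have "{U \<in> range W. x \<notin> U} \<subseteq> W ` {k. x \<notin> W k}" by auto
  ultimately show "finite {U \<in> range W. x \<notin> U}" by (rule finite_subset[rotated])
qed


text \<open>The constant functions \<open>1/(k+1)\<close> form an injective sequence converging in \<open>C\<^sub>p(X)\<close>;
  a homeomorphism carrying \<open>D\<close> onto \<open>D\<close> together with these constants pulls it back into \<open>D\<close>.\<close>

lemma Cp_cdh_pointwise_convergent_in_dense:
  assumes cdh: "countable_dense_homogeneous (Cp X)" and "topspace X \<noteq> {}"
    and D: "countable D" "D \<subseteq> topspace (Cp X)" "Cp X closure_of D = topspace (Cp X)"
  obtains e :: "nat \<Rightarrow> 'a \<Rightarrow> real" and F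
  where "inj e" "range e \<subseteq> D" "\<And>x. x \<in> topspace X \<Longrightarrow> (\<lambda>k. e k x) \<longlonglongrightarrow> F x"
proof -
  obtain x0 where x0: "x0 \<in> topspace X" using assms(2) by blast
  define c where "c k = restrict (\<lambda>_. inverse (real (Suc k))) (topspace X)" for k
  have c_lim: "limitin (Cp X) c (restrict (\<lambda>_. 0) (topspace X)) sequentially"
    unfolding c_def by (rule limitin_Cp_const[OF LIMSEQ_inverse_real_of_nat])
  have c_range: "range c \<subseteq> topspace (Cp X)"
    unfolding c_def using restrict_in_Cp[of X] by auto
  have c_inj: "inj c"
  proof (rule injI)
    fix a b assume "c a = c b"
    then have "c a x0 = c b x0" by simp
    then show "a = b" using x0 by (simp add: c_def)
  qed
  obtain e F where e: "inj e" "range e \<subseteq> D" and lim: "limitin (Cp X) e F sequentially"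
    by (rule countable_dense_homogeneous_injective_limit_in_dense[OF cdh D c_lim c_range c_inj])
  show ?thesis by (rule that[OF e limitin_Cp_pointwise[OF lim]])
qed

lemma omega_cover_topspace_nonempty:
  assumes "omega_cover X \<U>"
  shows "topspace X \<noteq> {}"
proof -
  obtain U where U: "U \<in> \<U>" "openin X U" using assms unfolding omega_cover_def open_cover_def by blast
  moreover have "topspace X \<notin> \<U>" using assms unfolding omega_cover_def by blast
  moreover have "U \<subseteq> topspace X" by (rule openin_subset[OF U(2)])
  ultimately show ?thesis by auto
qed

lemma omega_cover_gamma_subcover_if_Cp_cdh:
  fixes \<Phi> :: "nat \<Rightarrow> 'a \<Rightarrow> real"
  assumes cdh: "countable_dense_homogeneous (Cp X)"
    and om: "omega_cover X \<U>"
    and cont: "\<And>j. continuous_map X euclideanreal (\<Phi> j)"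
    and W: "\<And>j. W j \<in> \<U>"
    and vanish: "\<And>j x. x \<in> topspace X \<Longrightarrow> x \<notin> W j \<Longrightarrow> \<Phi> j x \<le> 0"
    and pos: "\<And>G. finite G \<Longrightarrow> G \<subseteq> topspace X \<Longrightarrow> \<exists>j. \<forall>x\<in>G. 0 < \<Phi> j x"
  shows "\<exists>\<V>\<subseteq>\<U>. gamma_cover X \<V>"
proof -
  have "separable_space (Cp X)" using cdh by (simp add: countable_dense_homogeneous_def)
  then obtain f \<iota> where f: "range f \<subseteq> topspace (Cp X)" "Cp X closure_of range f = topspace (Cp X)"
      and f_escapes: "\<And>n x. x \<in> topspace X \<Longrightarrow> \<Phi> (\<iota> n) x \<le> 0 \<Longrightarrow> real n \<le> f n x"
    using Cp_dense_sequence_escaping[OF _ cont pos] by blast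
  have "countable (range f)" by simp
  then obtain e F where e: "inj e" "range e \<subseteq> range f"
      and e_lim: "\<And>x. x \<in> topspace X \<Longrightarrow> (\<lambda>k. e k x) \<longlonglongrightarrow> F x"
    using Cp_cdh_pointwise_convergent_in_dense[OF cdh omega_cover_topspace_nonempty[OF om] _ f]
    by blast
  define m where "m k = inv f (e k)" for k
  have m: "f (m k) = e k" for k
    unfolding m_def using e(2) by (auto intro: f_inv_into_f)
  have "inj m"
  proof (rule injI)
    fix a b assume "m a = m b"
    then have "e a = e b" using m by metis
    with e(1) show "a = b" by (rule injD)
  qed
  define V where "V k = W (\<iota> (m k))" for k
  have "finite {k. x \<notin> V k}" if x: "x \<in> topspace X" for x
  proof (rule finite_subset)
    show "{k. x \<notin> V k} \<subseteq> {k. real (m k) \<le> e k x}"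
    proof
      fix k assume "k \<in> {k. x \<notin> V k}"
      then have "\<Phi> (\<iota> (m k)) x \<le> 0" using vanish[OF x] by (simp add: V_def)
      then have "real (m k) \<le> f (m k) x" by (rule f_escapes[OF x])
      then show "k \<in> {k. real (m k) \<le> e k x}" by (simp add: m)
    qed
    show "finite {k. real (m k) \<le> e k x}"
      by (rule finite_dominated_by_convergent[OF e_lim[OF x] \<open>inj m\<close>])
  qed
  moreover have "openin X (V k)" "V k \<noteq> topspace X" for k
  proof -
    have "\<forall>U\<in>\<U>. openin X U" "topspace X \<notin> \<U>"
      using om unfolding omega_cover_def open_cover_def by auto
    then show "openin X (V k)" "V k \<noteq> topspace X" using W[of "\<iota> (m k)"] by (auto simp: V_def)
  qed
  ultimately have "gamma_cover X (range V)" by (intro gamma_cover_range)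
  moreover have "range V \<subseteq> \<U>" using W by (auto simp: V_def)
  ultimately show ?thesis by blast
qed

context Metric_space
begin

definition mball_bump :: "('a \<times> real) set \<Rightarrow> 'a \<Rightarrow> real" where
  "mball_bump B x = (\<Sum>q\<in>B. max 0 (snd q - d (fst q) x))"

lemma continuous_map_mball_bump:
  assumes "finite B" "fst ` B \<subseteq> M"
  shows "continuous_map mtopology euclideanreal (mball_bump B)"
proof -
  have "continuous_map mtopology euclideanreal (d s)" if "s \<in> M" for s
    using continuous_on_mdist[of s "metric (M, d)"] that by simp
  then show ?thesis
    using assms unfolding mball_bump_def
    by (intro continuous_map_sum) (auto intro!: continuous_map_real_max continuous_map_diff)
qed

lemma mball_bump_pos:
  assumes "finite B" "q \<in> B" "x \<in> mball (fst q) (snd q)"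
  shows "0 < mball_bump B x"
proof -
  have "0 < max 0 (snd q - d (fst q) x)" using assms(3) by simp
  also have "\<dots> \<le> mball_bump B x"
    unfolding mball_bump_def by (rule member_le_sum) (use assms in auto)
  finally show ?thesis .
qed

lemma mball_bump_eq_0:
  assumes "x \<in> M" "fst ` B \<subseteq> M" "x \<notin> (\<Union>q\<in>B. mball (fst q) (snd q))"
  shows "mball_bump B x = 0"
  unfolding mball_bump_def using assms by (intro sum.neutral) force

lemma mball_in_openin_dense_centres:
  assumes "mtopology closure_of C = M" "openin mtopology U" "x \<in> U"
  shows "\<exists>s\<in>C. \<exists>k. x \<in> mball s (inverse (real (Suc k))) \<and> mball s (inverse (real (Suc k))) \<subseteq> U"
proof -
  obtain r where r: "r > 0" "mball x r \<subseteq> U" and x: "x \<in> M"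
    using assms(2,3) openin_mtopology by blast
  obtain k :: nat where k: "inverse (real (Suc k)) < r / 2"
    using r(1) by (metis half_gt_zero_iff reals_Archimedean)
  have "x \<in> mtopology closure_of C" using assms(1) x by simp
  then obtain s where s: "s \<in> C" "s \<in> mball x (inverse (real (Suc k)))"
    unfolding in_closure_of using x by (meson centre_in_mball_iff openin_mball of_nat_0_less_iff
        positive_imp_inverse_positive zero_less_Suc)
  have "mball s (inverse (real (Suc k))) \<subseteq> mball x r"
  proof
    fix y assume "y \<in> mball s (inverse (real (Suc k)))"
    moreover have "d x y \<le> d x s + d s y" using s(2) calculation by (auto intro: triangle)
    ultimately show "y \<in> mball x r" using s(2) k x by auto
  qed
  then show ?thesis using s r(2) commute by (intro bexI[OF _ s(1)] exI[of _ k]) auto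
qed

text \<open>Balls with centres in a countable dense set and radii \<open>1/(k+1)\<close> form a countable base;
  a bump is taken for each finite family of such balls lying inside a member of \<open>\<U>\<close>.\<close>

lemma countable_bump_family:
  assumes "separable_space mtopology"
    and opens: "\<And>U. U \<in> \<U> \<Longrightarrow> openin mtopology U"
    and finite_in: "\<And>G. finite G \<Longrightarrow> G \<subseteq> M \<Longrightarrow> \<exists>U\<in>\<U>. G \<subseteq> U"
  obtains \<Phi> :: "nat \<Rightarrow> 'a \<Rightarrow> real" and W :: "nat \<Rightarrow> 'a set" where
    "\<And>j. continuous_map mtopology euclideanreal (\<Phi> j)" "\<And>j. W j \<in> \<U>"
    "\<And>j x. x \<in> M \<Longrightarrow> x \<notin> W j \<Longrightarrow> \<Phi> j x \<le> 0"
    "\<And>G. finite G \<Longrightarrow> G \<subseteq> M \<Longrightarrow> \<exists>j. \<forall>x\<in>G. 0 < \<Phi> j x"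
proof -
  obtain C where C: "countable C" "C \<subseteq> M" "mtopology closure_of C = M"
    using assms(1) unfolding separable_space_def by auto
  define R where "R = range (\<lambda>k::nat. inverse (real (Suc k)))"
  define J where "J = {B. finite B \<and> B \<subseteq> C \<times> R \<and> (\<exists>U\<in>\<U>. (\<Union>q\<in>B. mball (fst q) (snd q)) \<subseteq> U)}"
  have "countable J"
    by (rule countable_subset[OF _ countable_Collect_finite_subset[of "C \<times> R"]])
      (auto simp: J_def C(1) R_def)
  moreover have "{} \<in> J" using finite_in[of "{}"] by (auto simp: J_def)
  ultimately have J_enum: "from_nat_into J j \<in> J" "\<And>B. B \<in> J \<Longrightarrow> \<exists>j. from_nat_into J j = B"
    for j by (auto intro: from_nat_into from_nat_into_surj)
  define W where "W j = (SOME U. U \<in> \<U> \<and> (\<Union>q\<in>from_nat_into J j. mball (fst q) (snd q)) \<subseteq> U)" for j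
  have W: "W j \<in> \<U> \<and> (\<Union>q\<in>from_nat_into J j. mball (fst q) (snd q)) \<subseteq> W j" for j
    unfolding W_def by (rule someI_ex) (use J_enum(1)[of j] in \<open>auto simp: J_def\<close>)
  have B: "finite (from_nat_into J j)" "fst ` from_nat_into J j \<subseteq> M" for j
    using J_enum(1)[of j] C(2) by (auto simp: J_def)
  show ?thesis
  proof (rule that[of "\<lambda>j. mball_bump (from_nat_into J j)" W])
    show "continuous_map mtopology euclideanreal (mball_bump (from_nat_into J j))" for j
      using B by (rule continuous_map_mball_bump)
    show "W j \<in> \<U>" for j using W by blast
    show "mball_bump (from_nat_into J j) x \<le> 0" if "x \<in> M" "x \<notin> W j" for j x
    proof -
      have "x \<notin> (\<Union>q\<in>from_nat_into J j. mball (fst q) (snd q))" using W[of j] that(2) by blast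
      then show ?thesis using mball_bump_eq_0[OF that(1) B(2)] by simp
    qed
    fix G assume G: "finite G" "G \<subseteq> M"
    obtain U where U: "U \<in> \<U>" "G \<subseteq> U" using finite_in[OF G] by blast
    have "\<forall>x\<in>G. \<exists>q. q \<in> C \<times> R \<and> x \<in> mball (fst q) (snd q) \<and> mball (fst q) (snd q) \<subseteq> U"
    proof
      fix x assume x: "x \<in> G"
      obtain s k where "s \<in> C" "x \<in> mball s (inverse (real (Suc k)))"
          "mball s (inverse (real (Suc k))) \<subseteq> U"
        using mball_in_openin_dense_centres[OF C(3) opens[OF U(1)] subsetD[OF U(2) x]] by blast
      then show "\<exists>q. q \<in> C \<times> R \<and> x \<in> mball (fst q) (snd q) \<and> mball (fst q) (snd q) \<subseteq> U"
        by (intro exI[of _ "(s, inverse (real (Suc k)))"]) (auto simp: R_def)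
    qed
    then obtain p where p: "\<forall>x\<in>G. p x \<in> C \<times> R \<and> x \<in> mball (fst (p x)) (snd (p x))
                                   \<and> mball (fst (p x)) (snd (p x)) \<subseteq> U"
      by (rule bchoice[THEN exE])
    have "p ` G \<subseteq> C \<times> R" "(\<Union>q\<in>p ` G. mball (fst q) (snd q)) \<subseteq> U" using p by blast+
    then have "p ` G \<in> J" using G(1) U(1) unfolding J_def by blast
    then obtain j where j: "from_nat_into J j = p ` G" using J_enum(2) by blast
    have "0 < mball_bump (from_nat_into J j) x" if "x \<in> G" for x
      unfolding j by (rule mball_bump_pos) (use p G(1) that in auto)
    then show "\<exists>j. \<forall>x\<in>G. 0 < mball_bump (from_nat_into J j) x" by blast
  qed
qed

end

theorem mainTheorem17:
  fixes X :: "'a topology"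
  assumes "separable_space X" and "metrizable_space X"
    and "countable_dense_homogeneous (Cp X)"
  shows "gamma_set X"
  unfolding gamma_set_def
proof (intro allI impI)
  fix \<U> assume "omega_cover X \<U>"
  obtain M d where "Metric_space M d" and X: "X = Metric_space.mtopology M d"
    using assms(2) unfolding metrizable_space_def by blast
  then interpret Metric_space M d by simp
  have sep: "separable_space mtopology" and cdh: "countable_dense_homogeneous (Cp mtopology)"
    and om: "omega_cover mtopology \<U>"
    using assms(1,3) \<open>omega_cover X \<U>\<close> by (simp_all add: X)
  then have opens: "\<And>U. U \<in> \<U> \<Longrightarrow> openin mtopology U"
    and finite_in: "\<And>G. finite G \<Longrightarrow> G \<subseteq> M \<Longrightarrow> \<exists>U\<in>\<U>. G \<subseteq> U"
    unfolding omega_cover_def open_cover_def by auto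
  obtain \<Phi> :: "nat \<Rightarrow> 'a \<Rightarrow> real" and W :: "nat \<Rightarrow> 'a set"
    where "\<And>j. continuous_map mtopology euclideanreal (\<Phi> j)" "\<And>j. W j \<in> \<U>"
      "\<And>j x. x \<in> M \<Longrightarrow> x \<notin> W j \<Longrightarrow> \<Phi> j x \<le> 0"
      "\<And>G. finite G \<Longrightarrow> G \<subseteq> M \<Longrightarrow> \<exists>j. \<forall>x\<in>G. 0 < \<Phi> j x"
    using countable_bump_family[OF sep opens finite_in] by blast
  then have "\<exists>\<V>\<subseteq>\<U>. gamma_cover mtopology \<V>"
    by (intro omega_cover_gamma_subcover_if_Cp_cdh[OF cdh om]) auto
  then show "\<exists>\<V>\<subseteq>\<U>. gamma_cover X \<V>" by (simp add: X)
qed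

end
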